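(* Let $(V,\omega,H)$ be a linear Hamiltonian system (a finite-dimensional real symplectic vector space $(V,\omega)$ with a quadratic form $H$) which decomposes as a direct sum $(V_1,\omega_1,H_1)\oplus(V_2,\omega_2,H_2)$, i.e. $V=V_1\oplus V_2$ with $\omega=\omega_1\oplus\omega_2$ and $H(v_1+v_2)=H_1(v_1)+H_2(v_2)$. Let $\mathcal{N}=H^{-1}(0)$ and $\mathcal{N}_j=H_j^{-1}(0)\subset V_j$. Suppose the linear Hamiltonian vector fields associated with $H_1$ and $H_2$ have no eigenvalues in common. Then every Lagrangian subspace $L\subset V$ with $L\subset\mathcal{N}$ can be written as a direct sum $L=L_1\oplus L_2$, where each $L_j$ is a Lagrangian subspace of $(V_j,\omega_j)$ contained in $\mathcal{N}_j$.
   Context: For a linear Hamiltonian system $(V,\omega,H)$, the associated linear vector field is $X_H$ defined by $\omega(X_H(v),\cdot)=\mathrm{d}H(v)$; its eigenvalues are the eigenvalues of the system. A Lagrangian subspace of a symplectic vector space is a subspace of half the dimension on which the symplectic form vanishes. *)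

theory Defs
  imports "HOL-Analysis.Analysis"
begin

definition symplectic_form :: "('v::euclidean_space \<Rightarrow> 'v \<Rightarrow> real) \<Rightarrow> bool" where
  "symplectic_form \<omega> \<longleftrightarrow> bilinear \<omega> \<and> (\<forall>x y. \<omega> x y = - \<omega> y x)
     \<and> (\<forall>x. (\<forall>y. \<omega> x y = 0) \<longrightarrow> x = 0)"

definition quadratic_form :: "('v::euclidean_space \<Rightarrow> real) \<Rightarrow> bool" where
  "quadratic_form H \<longleftrightarrow> (\<exists>B. bilinear B \<and> (\<forall>x y. B x y = B y x) \<and> (\<forall>v. H v = B v v))"

definition ham_field :: "('v::euclidean_space \<Rightarrow> 'v \<Rightarrow> real) \<Rightarrow> ('v \<Rightarrow> real) \<Rightarrow> ('v \<Rightarrow> 'v) \<Rightarrow> bool" where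
  "ham_field \<omega> H X \<longleftrightarrow> linear X \<and> (\<forall>v. (H has_derivative (\<lambda>w. \<omega> (X v) w)) (at v))"

text \<open>Complex eigenvalue of a real linear map on real^'n, i.e. eigenvalue of its
  complexification (the complex matrix with the same real entries).\<close>
definition cx_eigenvalue :: "(real^'n \<Rightarrow> real^'n) \<Rightarrow> complex \<Rightarrow> bool" where
  "cx_eigenvalue X \<mu> \<longleftrightarrow> (\<exists>z :: complex^'n. z \<noteq> 0 \<and>
     (\<chi> i. \<Sum>j\<in>UNIV. complex_of_real (matrix X $ i $ j) * z $ j) = \<mu> *s z)"

definition lagrangian :: "('v::euclidean_space \<Rightarrow> 'v \<Rightarrow> real) \<Rightarrow> 'v set \<Rightarrow> bool" where
  "lagrangian \<omega> L \<longleftrightarrow> subspace L \<and> 2 * dim L = DIM('v) \<and> (\<forall>x\<in>L. \<forall>y\<in>L. \<omega> x y = 0)"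

definition sum_form :: "('a \<Rightarrow> 'a \<Rightarrow> real) \<Rightarrow> ('b \<Rightarrow> 'b \<Rightarrow> real) \<Rightarrow> ('a \<times> 'b) \<Rightarrow> ('a \<times> 'b) \<Rightarrow> real" where
  "sum_form \<omega>1 \<omega>2 v w = \<omega>1 (fst v) (fst w) + \<omega>2 (snd v) (snd w)"

definition sum_ham :: "('a \<Rightarrow> real) \<Rightarrow> ('b \<Rightarrow> real) \<Rightarrow> ('a \<times> 'b) \<Rightarrow> real" where
  "sum_ham H1 H2 v = H1 (fst v) + H2 (snd v)"

end

theory Submission
  imports Defs
    "HOL-Computational_Algebra.Polynomial_Factorial"
    "HOL-Computational_Algebra.Field_as_Ring"
    "HOL-Computational_Algebra.Fundamental_Theorem_Algebra"
begin

(* A Lagrangian subspace L on which H vanishes is invariant under the Hamiltonian field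
   X (a, b) = (X1 a, X2 b) of the sum: with B the polar form of H, polarizing H on L gives
   omega (X x) l = 2 B x l = 0 for x, l in L, so X x lies in the symplectic complement of L,
   which is L itself.
   As X1 and X2 have no common eigenvalue, annihilating polynomials of a and b whose roots are
   eigenvalues are coprime, and a Bezout combination q satisfies q(X1) a = a and q(X2) b = 0.
   Hence (a, 0) = q(X) (a, b) lies in L whenever (a, b) does, so L is the product of its two
   slices; these are isotropic, and counting dimensions shows that both are Lagrangian. *)

definition poly_op :: "'a::field poly \<Rightarrow> ('a^'k \<Rightarrow> 'a^'k) \<Rightarrow> 'a^'k \<Rightarrow> 'a^'k" where
  "poly_op p f z = (\<Sum>i\<le>degree p. coeff p i *s (f ^^ i) z)"

definition is_eigenvalue :: "('a::field^'k \<Rightarrow> 'a^'k) \<Rightarrow> 'a \<Rightarrow> bool" where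
  "is_eigenvalue f \<mu> \<longleftrightarrow> (\<exists>y. y \<noteq> 0 \<and> f y = \<mu> *s y)"

lemma poly_op_sum_atMost:
  "degree p \<le> N \<Longrightarrow> poly_op p f z = (\<Sum>i\<le>N. coeff p i *s (f ^^ i) z)"
  unfolding poly_op_def by (rule sum.mono_neutral_left) (auto simp: coeff_eq_0)

lemma poly_op_0 [simp]: "poly_op 0 f z = 0"
  by (simp add: poly_op_def)

lemma poly_op_1 [simp]: "poly_op 1 f z = z"
  by (simp add: poly_op_def)

lemma poly_op_monom: "poly_op (monom c n) f z = c *s (f ^^ n) z"
proof -
  have "poly_op (monom c n) f z = (\<Sum>i\<le>n. coeff (monom c n) i *s (f ^^ i) z)"
    by (rule poly_op_sum_atMost[OF degree_monom_le])
  also have "\<dots> = (\<Sum>i\<le>n. if i = n then c *s (f ^^ n) z else 0)"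
    by (rule sum.cong) (auto simp: coeff_monom)
  finally show ?thesis by simp
qed

lemma poly_op_add: "poly_op (p + q) f z = poly_op p f z + poly_op q f z"
proof -
  let ?N = "max (degree p) (degree q)"
  have "poly_op (p + q) f z = (\<Sum>i\<le>?N. coeff (p + q) i *s (f ^^ i) z)"
    by (rule poly_op_sum_atMost) (simp add: degree_add_le)
  also have "\<dots> = poly_op p f z + poly_op q f z"
    by (simp add: poly_op_sum_atMost[of p ?N] poly_op_sum_atMost[of q ?N]
        sum.distrib vector_sadd_rdistrib)
  finally show ?thesis .
qed

lemma poly_op_smult: "poly_op (smult c p) f z = c *s poly_op p f z"
  by (simp add: poly_op_sum_atMost[OF degree_smult_le] poly_op_def vec.scale_sum_right)

lemma poly_op_diff: "poly_op (p - q) f z = poly_op p f z - poly_op q f z"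
proof -
  have "p - q = p + smult (-1) q" by simp
  then show ?thesis
    by (simp only: poly_op_add poly_op_smult) (simp flip: vector_sneg_minus1)
qed

context
  fixes f :: "'a::field^'k \<Rightarrow> 'a^'k"
  assumes lin: "Vector_Spaces.linear (*s) (*s) f"
begin

lemma poly_op_pCons: "poly_op (pCons a p) f z = a *s z + f (poly_op p f z)"
proof -
  have "poly_op (pCons a p) f z = (\<Sum>i\<le>Suc (degree p). coeff (pCons a p) i *s (f ^^ i) z)"
    by (rule poly_op_sum_atMost) (simp add: degree_pCons_le)
  also have "\<dots> = a *s z + (\<Sum>i\<le>degree p. coeff p i *s f ((f ^^ i) z))"
    by (simp add: sum.atMost_Suc_shift del: sum.atMost_Suc)
  also have "(\<Sum>i\<le>degree p. coeff p i *s f ((f ^^ i) z)) = f (poly_op p f z)"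
    by (simp add: poly_op_def vec.linear_sum[OF lin] vec.linear_scale[OF lin])
  finally show ?thesis .
qed

lemma poly_op_linear_factor: "poly_op [:-\<mu>, 1:] f z = f z - \<mu> *s z"
  by (simp add: poly_op_pCons vec.linear_0[OF lin])

lemma poly_op_mult: "poly_op (p * q) f z = poly_op p f (poly_op q f z)"
proof (induction p)
  case (pCons a p)
  have "poly_op (pCons a p * q) f z = poly_op (smult a q + pCons 0 (p * q)) f z"
    by simp
  also have "\<dots> = poly_op (pCons a p) f (poly_op q f z)"
    by (simp add: poly_op_add poly_op_smult poly_op_pCons pCons.IH)
  finally show ?case .
qed simp

lemma poly_op_zero_vector [simp]: "poly_op p f 0 = 0"
  by (induction p) (simp_all add: poly_op_pCons vec.linear_0[OF lin])

lemma poly_op_annihilator_exists: "\<exists>p. p \<noteq> 0 \<and> poly_op p f z = 0"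
proof -
  define D where "D = CARD('k)"
  define v where "v k = (f ^^ k) z" for k
  show ?thesis
  proof (cases "inj_on v {..D}")
    case False
    then obtain i j where "i < j" "v i = v j"
      unfolding inj_on_def by (metis linorder_neqE_nat)
    define p :: "'a poly" where "p = monom 1 j - monom 1 i"
    have "coeff p j \<noteq> 0"
      using \<open>i < j\<close> by (simp add: p_def)
    then have "p \<noteq> 0"
      by auto
    moreover have "poly_op p f z = 0"
      using \<open>v i = v j\<close> by (simp add: p_def poly_op_diff poly_op_monom v_def)
    ultimately show ?thesis by blast
  next
    case True
    let ?S = "v ` {..D}"
    have "vec.dependent ?S"
      using True vec.dim_subset[OF subset_UNIV, of ?S]
      by (intro vec.dependent_biggerset_general) (simp add: card_image card_cart_basis D_def)
    then obtain c where c: "\<exists>w\<in>?S. c w \<noteq> 0" "(\<Sum>w\<in>?S. c w *s w) = 0"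
      using vec.dependent_finite[of ?S] by auto
    define p where "p = (\<Sum>k\<le>D. monom (c (v k)) k)"
    have coeff_p: "coeff p k = (if k \<le> D then c (v k) else 0)" for k
      by (simp add: p_def coeff_sum)
    obtain k0 where "k0 \<le> D" "c (v k0) \<noteq> 0"
      using c(1) by auto
    then have "p \<noteq> 0"
      using coeff_p[of k0] by auto
    have "degree p \<le> D"
      unfolding p_def by (intro degree_sum_le) (auto intro: order_trans[OF degree_monom_le])
    then have "poly_op p f z = (\<Sum>k\<le>D. c (v k) *s v k)"
      by (simp add: poly_op_sum_atMost coeff_p v_def)
    also have "\<dots> = 0"
      using c(2) by (simp add: sum.reindex[OF True])
    finally show ?thesis
      using \<open>p \<noteq> 0\<close> by blast
  qed
qed

text \<open>Dividing out a linear factor \<open>x - \<mu>\<close> at a non-eigenvalue \<open>\<mu>\<close> keeps the annihilator,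
  since \<open>f - \<mu>\<close> is injective.\<close>
lemma poly_op_annihilator_eigen_roots:
  obtains p where "p \<noteq> 0" "poly_op p f z = 0" "\<And>\<mu>. poly p \<mu> = 0 \<Longrightarrow> is_eigenvalue f \<mu>"
proof -
  have "\<exists>p. p \<noteq> 0 \<and> poly_op p f z = 0 \<and> (\<forall>\<mu>. poly p \<mu> = 0 \<longrightarrow> is_eigenvalue f \<mu>)"
    if "g \<noteq> 0" "poly_op g f z = 0" for g
    using that
  proof (induction "degree g" arbitrary: g rule: less_induct)
    case less
    show ?case
    proof (cases "\<forall>\<mu>. poly g \<mu> = 0 \<longrightarrow> is_eigenvalue f \<mu>")
      case False
      then obtain \<mu> where "poly g \<mu> = 0" and not_eigen: "\<not> is_eigenvalue f \<mu>"
        by blast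
      then obtain h where g: "g = [:-\<mu>, 1:] * h"
        by (auto simp: poly_eq_0_iff_dvd)
      have "h \<noteq> 0" using less.prems g by auto
      have "degree h < degree g"
        using \<open>h \<noteq> 0\<close> unfolding g by (subst degree_mult_eq) auto
      have "poly_op [:-\<mu>, 1:] f (poly_op h f z) = 0"
        using less.prems(2) by (simp only: g poly_op_mult)
      then have "f (poly_op h f z) = \<mu> *s poly_op h f z"
        by (simp add: poly_op_linear_factor)
      then have "poly_op h f z = 0"
        using not_eigen by (auto simp: is_eigenvalue_def)
      then show ?thesis
        using less.hyps[OF \<open>degree h < degree g\<close> \<open>h \<noteq> 0\<close>] by blast
    qed (use less.prems in blast)
  qed
  then show ?thesis
    using poly_op_annihilator_exists that by blast
qed

end

lemma coprime_if_no_common_root: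
  fixes p q :: "'a::alg_closed_field poly"
  assumes "p \<noteq> 0" and "\<And>x. poly p x = 0 \<Longrightarrow> poly q x \<noteq> 0"
  shows "coprime p q"
proof (rule coprimeI)
  fix c
  assume "c dvd p" "c dvd q"
  then have "c \<noteq> 0"
    using assms(1) by auto
  have "degree c = 0"
  proof (rule ccontr)
    assume "degree c \<noteq> 0"
    then obtain x where "poly c x = 0"
      using alg_closed_imp_poly_has_root by blast
    then have "poly p x = 0" "poly q x = 0"
      using \<open>c dvd p\<close> \<open>c dvd q\<close> by (auto elim!: dvdE)
    then show False
      using assms(2) by blast
  qed
  then show "is_unit c"
    using \<open>c \<noteq> 0\<close> by (simp add: is_unit_iff_degree)
qed

lemma poly_op_separates_spectra:
  fixes f :: "'a::{alg_closed_field,field_gcd}^'n \<Rightarrow> 'a^'n" and g :: "'a^'m \<Rightarrow> 'a^'m"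
  assumes lin_f: "Vector_Spaces.linear (*s) (*s) f"
    and lin_g: "Vector_Spaces.linear (*s) (*s) g"
    and disjoint: "\<And>\<mu>. is_eigenvalue f \<mu> \<Longrightarrow> \<not> is_eigenvalue g \<mu>"
  obtains r where "poly_op r f z = z" "poly_op r g w = 0"
proof -
  obtain p where p: "p \<noteq> 0" "poly_op p f z = 0" "\<And>\<mu>. poly p \<mu> = 0 \<Longrightarrow> is_eigenvalue f \<mu>"
    using poly_op_annihilator_eigen_roots[OF lin_f, where z = z] by blast
  obtain q where q: "poly_op q g w = 0" "\<And>\<mu>. poly q \<mu> = 0 \<Longrightarrow> is_eigenvalue g \<mu>"
    using poly_op_annihilator_eigen_roots[OF lin_g, where z = w] by blast
  have "coprime p q"
  proof (rule coprime_if_no_common_root[OF p(1)])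
    fix x
    assume "poly p x = 0"
    then show "poly q x \<noteq> 0"
      using p(3)[of x] q(2)[of x] disjoint[of x] by blast
  qed
  then obtain a b where bezout: "a * p + b * q = 1"
    by (metis bezout_coefficients_fst_snd coprime_iff_gcd_eq_1)
  have "z = poly_op (a * p + b * q) f z"
    by (simp add: bezout)
  also have "\<dots> = poly_op (b * q) f z"
    using p(2) by (simp add: poly_op_add poly_op_mult[OF lin_f] poly_op_zero_vector[OF lin_f])
  finally have "poly_op (b * q) f z = z" ..
  moreover have "poly_op (b * q) g w = 0"
    using q(1) by (simp add: poly_op_mult[OF lin_g] poly_op_zero_vector[OF lin_g])
  ultimately show ?thesis
    using that by blast
qed

definition complex_matrix :: "(real^'n \<Rightarrow> real^'n) \<Rightarrow> complex^'n^'n" where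
  "complex_matrix X = (\<chi> i j. complex_of_real (matrix X $ i $ j))"

definition of_real_vec :: "real^'n \<Rightarrow> complex^'n" where
  "of_real_vec v = (\<chi> i. complex_of_real (v $ i))"

definition Re_vec :: "complex^'n \<Rightarrow> real^'n" where
  "Re_vec z = (\<chi> i. Re (z $ i))"

lemma cx_eigenvalue_iff: "cx_eigenvalue X \<mu> \<longleftrightarrow> is_eigenvalue ((*v) (complex_matrix X)) \<mu>"
  by (simp add: cx_eigenvalue_def is_eigenvalue_def complex_matrix_def matrix_vector_mult_def)

lemma complex_matrix_of_real_vec:
  assumes "linear X"
  shows "complex_matrix X *v of_real_vec v = of_real_vec (X v)"
proof -
  have "X v = matrix X *v v"
    using assms by simp
  then show ?thesis
    by (simp add: vec_eq_iff complex_matrix_def of_real_vec_def matrix_vector_mult_def)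
qed

lemma Re_vec_poly_op_complex_matrix:
  assumes "linear X"
  shows "Re_vec (poly_op r ((*v) (complex_matrix X)) (of_real_vec u)) = poly_op (map_poly Re r) X u"
proof -
  have powers: "((*v) (complex_matrix X) ^^ i) (of_real_vec u) = of_real_vec ((X ^^ i) u)" for i
    by (induction i) (simp_all add: complex_matrix_of_real_vec[OF assms])
  show ?thesis
    unfolding poly_op_sum_atMost[OF map_poly_degree_leq] unfolding poly_op_def powers
    by (simp add: coeff_map_poly vec_eq_iff of_real_vec_def Re_vec_def Re_sum)
qed

lemma poly_op_separates_real_spectra:
  fixes X1 :: "real^'n \<Rightarrow> real^'n" and X2 :: "real^'m \<Rightarrow> real^'m"
  assumes "linear X1" "linear X2" "\<forall>\<mu>. \<not> (cx_eigenvalue X1 \<mu> \<and> cx_eigenvalue X2 \<mu>)"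
  obtains q where "poly_op q X1 u = u" "poly_op q X2 w = 0"
proof -
  obtain r where
    "poly_op r ((*v) (complex_matrix X1)) (of_real_vec u) = of_real_vec u"
    "poly_op r ((*v) (complex_matrix X2)) (of_real_vec w) = 0"
    using poly_op_separates_spectra[OF matrix_vector_mul_linear_gen matrix_vector_mul_linear_gen]
      assms(3) by (metis cx_eigenvalue_iff)
  then have "poly_op (map_poly Re r) X1 u = u" "poly_op (map_poly Re r) X2 w = 0"
    using Re_vec_poly_op_complex_matrix[OF assms(1), of r u]
      Re_vec_poly_op_complex_matrix[OF assms(2), of r w]
    by (simp_all add: Re_vec_def of_real_vec_def vec_eq_iff)
  then show ?thesis
    using that by blast
qed

lemma poly_op_pair_in_invariant_subspace:
  fixes f :: "real^'n \<Rightarrow> real^'n" and g :: "real^'m \<Rightarrow> real^'m"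
  assumes lin_f: "linear f" and lin_g: "linear g" and L: "subspace L"
    and invariant: "\<And>a b. (a, b) \<in> L \<Longrightarrow> (f a, g b) \<in> L"
    and "(a, b) \<in> L"
  shows "(poly_op p f a, poly_op p g b) \<in> L"
proof (induction p)
  case 0
  show ?case
    using subspace_0[OF L] by (simp add: zero_prod_def)
next
  case (pCons c p)
  have "(poly_op (pCons c p) f a, poly_op (pCons c p) g b)
      = c *\<^sub>R (a, b) + (f (poly_op p f a), g (poly_op p g b))"
    using lin_f lin_g
    by (simp add: poly_op_pCons flip: linear_matrix_vector_mul_eq) (simp add: scalar_mult_eq_scaleR)
  also have "\<dots> \<in> L"
    using pCons.IH \<open>(a, b) \<in> L\<close> by (intro subspace_add subspace_scale L invariant)
  finally show ?case .
qed

lemma invariant_subspace_slice: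
  fixes X1 :: "real^'n \<Rightarrow> real^'n" and X2 :: "real^'m \<Rightarrow> real^'m"
  assumes "linear X1" "linear X2" "\<forall>\<mu>. \<not> (cx_eigenvalue X1 \<mu> \<and> cx_eigenvalue X2 \<mu>)"
    and "subspace L" "\<And>a b. (a, b) \<in> L \<Longrightarrow> (X1 a, X2 b) \<in> L" "(a, b) \<in> L"
  shows "(a, 0) \<in> L"
proof -
  obtain q where "poly_op q X1 a = a" "poly_op q X2 b = 0"
    using poly_op_separates_real_spectra[OF assms(1-3)] .
  then show ?thesis
    using poly_op_pair_in_invariant_subspace[OF assms(1,2,4,5,6), of q] by simp
qed

definition symplectic_complement :: "('v \<Rightarrow> 'v \<Rightarrow> real) \<Rightarrow> 'v set \<Rightarrow> 'v set" where
  "symplectic_complement \<omega> W = {y. \<forall>w\<in>W. \<omega> y w = 0}"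

lemma symplectic_formD:
  assumes "symplectic_form \<omega>"
  shows "bilinear \<omega>" and "\<And>x. \<forall>y. \<omega> x y = 0 \<Longrightarrow> x = 0"
  using assms unfolding symplectic_form_def by blast+

lemma subspace_symplectic_complement:
  "bilinear \<omega> \<Longrightarrow> subspace (symplectic_complement \<omega> W)"
  unfolding subspace_def symplectic_complement_def
  by (simp add: bilinear_lzero bilinear_ladd bilinear_lmul)

lemma dim_symplectic_complement:
  fixes \<omega> :: "'v::euclidean_space \<Rightarrow> 'v \<Rightarrow> real"
  assumes bil: "bilinear \<omega>" and nondeg: "\<And>x. \<forall>y. \<omega> x y = 0 \<Longrightarrow> x = 0"
    and "subspace W"
  shows "dim (symplectic_complement \<omega> W) + dim W = DIM('v)"
proof -
  text \<open>\<open>\<Phi> y\<close> represents \<open>\<omega> y\<close> by the inner product, so \<open>\<Phi>\<close> is a linear isomorphism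
    carrying the symplectic complement onto the orthogonal complement.\<close>
  define \<Phi> where "\<Phi> y = (\<Sum>b\<in>Basis. \<omega> y b *\<^sub>R b)" for y
  have inner_\<Phi>: "\<Phi> y \<bullet> x = \<omega> y x" for y x
  proof -
    have "\<omega> y x = \<omega> y (\<Sum>b\<in>Basis. (x \<bullet> b) *\<^sub>R b)"
      by (simp add: euclidean_representation)
    also have "\<dots> = (\<Sum>b\<in>Basis. (x \<bullet> b) * \<omega> y b)"
      using bil by (simp add: bilinear_def linear_sum linear_scale)
    also have "\<dots> = \<Phi> y \<bullet> x"
      by (simp add: \<Phi>_def inner_sum_left inner_sum_right inner_commute mult.commute)
    finally show ?thesis ..
  qed
  have "linear \<Phi>"
  proof (rule linearI)
    show "\<Phi> (y + z) = \<Phi> y + \<Phi> z" for y z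
      using bil by (simp add: \<Phi>_def bilinear_ladd scaleR_add_left sum.distrib)
    show "\<Phi> (c *\<^sub>R y) = c *\<^sub>R \<Phi> y" for c y
      using bil by (simp add: \<Phi>_def bilinear_lmul scaleR_sum_right)
  qed
  moreover have "y = 0" if "\<Phi> y = 0" for y
    using nondeg[of y] that inner_\<Phi>[of y] by simp
  ultimately have "inj \<Phi>"
    by (simp add: linear_injective_0)
  have "dim (\<Phi> ` symplectic_complement \<omega> W) = dim (symplectic_complement \<omega> W)"
    using \<open>linear \<Phi>\<close> inj_on_subset[OF \<open>inj \<Phi>\<close> subset_UNIV] by (rule dim_image_eq)
  moreover have "\<Phi> ` symplectic_complement \<omega> W = {z. \<forall>w\<in>W. orthogonal w z}"
  proof -
    have "symplectic_complement \<omega> W = \<Phi> -` {z. \<forall>w\<in>W. orthogonal w z}"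
      using inner_\<Phi> by (auto simp: symplectic_complement_def orthogonal_def inner_commute)
    moreover have "surj \<Phi>"
      using linear_injective_imp_surjective[OF \<open>linear \<Phi>\<close> \<open>inj \<Phi>\<close>] by simp
    ultimately show ?thesis
      by (simp only: image_vimage_eq) simp
  qed
  ultimately show ?thesis
    using dim_subspace_orthogonal_to_vectors[OF \<open>subspace W\<close> subspace_UNIV] by simp
qed

lemma isotropic_dim_le:
  fixes \<omega> :: "'v::euclidean_space \<Rightarrow> 'v \<Rightarrow> real"
  assumes "bilinear \<omega>" "\<And>x. \<forall>y. \<omega> x y = 0 \<Longrightarrow> x = 0"
    and "subspace W" "\<forall>x\<in>W. \<forall>y\<in>W. \<omega> x y = 0"
  shows "2 * dim W \<le> DIM('v)"
proof -
  have "dim W \<le> dim (symplectic_complement \<omega> W)"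
    using assms(4) by (intro dim_subset) (auto simp: symplectic_complement_def)
  then show ?thesis
    using dim_symplectic_complement[OF assms(1-3)] by simp
qed

lemma lagrangian_eq_symplectic_complement:
  fixes \<omega> :: "'v::euclidean_space \<Rightarrow> 'v \<Rightarrow> real"
  assumes "bilinear \<omega>" "\<And>x. \<forall>y. \<omega> x y = 0 \<Longrightarrow> x = 0" and "lagrangian \<omega> L"
  shows "symplectic_complement \<omega> L = L"
proof -
  have "subspace L" "2 * dim L = DIM('v)" "L \<subseteq> symplectic_complement \<omega> L"
    using assms(3) by (auto simp: lagrangian_def symplectic_complement_def)
  moreover have "dim (symplectic_complement \<omega> L) \<le> dim L"
    using dim_symplectic_complement[OF assms(1,2) \<open>subspace L\<close>] \<open>2 * dim L = DIM('v)\<close> by simp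
  ultimately show ?thesis
    using subspace_dim_equal[OF _ subspace_symplectic_complement[OF assms(1)]] by blast
qed

lemma quadratic_form_0: "quadratic_form H \<Longrightarrow> H 0 = 0"
  unfolding quadratic_form_def by (auto simp: bilinear_lzero)

lemma ham_field_polar:
  assumes "ham_field \<omega> H X" "bilinear B" "\<forall>x y. B x y = B y x" "\<forall>v. H v = B v v"
  shows "\<omega> (X v) w = 2 * B v w"
proof -
  have "H = (\<lambda>x. B x x)"
    using assms(4) by blast
  then have "(H has_derivative (\<lambda>h. B v h + B h v)) (at v)"
    using bounded_bilinear.FDERIV[OF bilinear_conv_bounded_bilinear[THEN iffD1, OF assms(2)]
        has_derivative_ident has_derivative_ident]
    by simp
  then have "(\<lambda>h. \<omega> (X v) h) = (\<lambda>h. B v h + B h v)"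
    using assms(1) has_derivative_unique unfolding ham_field_def by blast
  then have "\<omega> (X v) w = B v w + B w v"
    by (rule fun_cong)
  then show ?thesis
    using assms(3) by simp
qed

lemma lagrangian_null_invariant:
  fixes \<omega> :: "'v::euclidean_space \<Rightarrow> 'v \<Rightarrow> real"
  assumes "bilinear \<omega>" "\<And>x. \<forall>y. \<omega> x y = 0 \<Longrightarrow> x = 0"
    and "quadratic_form H" "ham_field \<omega> H X"
    and "lagrangian \<omega> L" "L \<subseteq> {v. H v = 0}" "x \<in> L"
  shows "X x \<in> L"
proof -
  obtain B where B: "bilinear B" "\<forall>x y. B x y = B y x" "\<forall>v. H v = B v v"
    using assms(3) unfolding quadratic_form_def by blast
  have "subspace L"
    using assms(5) by (simp add: lagrangian_def)
  have "B x l = 0" if "l \<in> L" for l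
  proof -
    have "x + l \<in> L"
      using \<open>subspace L\<close> \<open>x \<in> L\<close> \<open>l \<in> L\<close> by (rule subspace_add)
    then have "H (x + l) = 0" "H x = 0" "H l = 0"
      using assms(6,7) that by auto
    moreover have "H (x + l) = H x + 2 * B x l + H l"
      using B by (simp add: bilinear_ladd bilinear_radd)
    ultimately show ?thesis
      by simp
  qed
  then have "X x \<in> symplectic_complement \<omega> L"
    using ham_field_polar[OF assms(4) B] by (simp add: symplectic_complement_def)
  then show ?thesis
    using lagrangian_eq_symplectic_complement[OF assms(1,2,5)] by simp
qed

lemma bilinear_sum_form:
  assumes "bilinear \<omega>1" "bilinear \<omega>2"
  shows "bilinear (sum_form \<omega>1 \<omega>2)"
  unfolding bilinear_def
proof safe
  fix x
  show "linear (sum_form \<omega>1 \<omega>2 x)"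
    using assms by (intro linearI)
      (simp_all add: sum_form_def bilinear_radd bilinear_rmul algebra_simps)
next
  fix y
  show "linear (\<lambda>x. sum_form \<omega>1 \<omega>2 x y)"
    using assms by (intro linearI)
      (simp_all add: sum_form_def bilinear_ladd bilinear_lmul algebra_simps)
qed

lemma symplectic_form_sum_form:
  assumes "symplectic_form \<omega>1" "symplectic_form \<omega>2"
  shows "symplectic_form (sum_form \<omega>1 \<omega>2)"
  unfolding symplectic_form_def
proof (intro conjI allI impI)
  show "bilinear (sum_form \<omega>1 \<omega>2)"
    using assms by (intro bilinear_sum_form symplectic_formD)
  have skew: "\<omega>1 a b = - \<omega>1 b a" "\<omega>2 c d = - \<omega>2 d c" for a b c d
    using assms unfolding symplectic_form_def by blast+
  show "sum_form \<omega>1 \<omega>2 x y = - sum_form \<omega>1 \<omega>2 y x" for x y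
    using skew(1)[where a = "fst x" and b = "fst y"] skew(2)[where c = "snd x" and d = "snd y"]
    by (simp add: sum_form_def)
next
  fix x :: "'a \<times> 'b"
  assume x: "\<forall>y. sum_form \<omega>1 \<omega>2 x y = 0"
  have "\<omega>1 (fst x) c = 0" for c
    using x[rule_format, of "(c, 0)"] bilinear_rzero[OF symplectic_formD(1)[OF assms(2)]]
    by (simp add: sum_form_def)
  moreover have "\<omega>2 (snd x) d = 0" for d
    using x[rule_format, of "(0, d)"] bilinear_rzero[OF symplectic_formD(1)[OF assms(1)]]
    by (simp add: sum_form_def)
  ultimately show "x = 0"
    using symplectic_formD(2)[OF assms(1)] symplectic_formD(2)[OF assms(2)]
    by (simp add: prod_eq_iff)
qed

lemma quadratic_form_sum_ham:
  assumes "quadratic_form H1" "quadratic_form H2"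
  shows "quadratic_form (sum_ham H1 H2)"
proof -
  obtain B1 B2 where "bilinear B1" "\<forall>x y. B1 x y = B1 y x" "\<forall>v. H1 v = B1 v v"
    "bilinear B2" "\<forall>x y. B2 x y = B2 y x" "\<forall>v. H2 v = B2 v v"
    using assms unfolding quadratic_form_def by metis
  then show ?thesis
    unfolding quadratic_form_def
    by (intro exI[of _ "sum_form B1 B2"]) (simp add: bilinear_sum_form sum_form_def sum_ham_def)
qed

lemma ham_field_sum:
  assumes "ham_field \<omega>1 H1 X1" "ham_field \<omega>2 H2 X2"
  shows "ham_field (sum_form \<omega>1 \<omega>2) (sum_ham H1 H2) (\<lambda>(a, b). (X1 a, X2 b))"
  unfolding ham_field_def
proof (intro conjI allI)
  show "linear (\<lambda>(a, b). (X1 a, X2 b))"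
    using assms by (intro linearI) (auto simp: ham_field_def linear_add linear_scale)
next
  fix v :: "'a \<times> 'b"
  have "((\<lambda>v. H1 (fst v) + H2 (snd v)) has_derivative
      (\<lambda>w. \<omega>1 (X1 (fst v)) (fst w) + \<omega>2 (X2 (snd v)) (snd w))) (at v)"
    using assms unfolding ham_field_def
    by (intro has_derivative_add has_derivative_compose[OF has_derivative_fst[OF has_derivative_ident]]
        has_derivative_compose[OF has_derivative_snd[OF has_derivative_ident]]) auto
  moreover have "sum_ham H1 H2 = (\<lambda>v. H1 (fst v) + H2 (snd v))"
    by (simp add: fun_eq_iff sum_ham_def)
  ultimately show "(sum_ham H1 H2 has_derivative
      (\<lambda>w. sum_form \<omega>1 \<omega>2 ((\<lambda>(a, b). (X1 a, X2 b)) v) w)) (at v)"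
    by (simp add: sum_form_def case_prod_beta)
qed

lemma subspace_slices:
  assumes "subspace L"
  shows "subspace {a. (a, 0) \<in> L}" and "subspace {b. (0, b) \<in> L}"
  using subspace_0[OF assms] subspace_add[OF assms] subspace_scale[OF assms]
  by (fastforce simp: subspace_def zero_prod_def)+

lemma subspace_eq_Times_slices:
  assumes "subspace L" and "\<And>a b. (a, b) \<in> L \<Longrightarrow> (a, 0) \<in> L"
  shows "L = {a. (a, 0) \<in> L} \<times> {b. (0, b) \<in> L}"
proof safe
  fix a b
  assume "(a, b) \<in> L"
  then show "(a, 0) \<in> L"
    by (rule assms(2))
  then have "(a, b) - (a, 0) \<in> L"
    using \<open>(a, b) \<in> L\<close> by (intro subspace_diff assms(1))
  then show "(0, b) \<in> L"
    by simp
next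
  fix a b
  assume "(a, 0) \<in> L" "(0, b) \<in> L"
  then have "(a, 0) + (0, b) \<in> L"
    by (intro subspace_add assms(1))
  then show "(a, b) \<in> L"
    by simp
qed

lemma lagrangian_Times:
  fixes \<omega>1 :: "'a::euclidean_space \<Rightarrow> 'a \<Rightarrow> real" and \<omega>2 :: "'b::euclidean_space \<Rightarrow> 'b \<Rightarrow> real"
  assumes "symplectic_form \<omega>1" "symplectic_form \<omega>2" "subspace L1" "subspace L2"
    and "lagrangian (sum_form \<omega>1 \<omega>2) (L1 \<times> L2)"
  shows "lagrangian \<omega>1 L1" and "lagrangian \<omega>2 L2"
proof -
  have iso: "\<forall>x\<in>L1 \<times> L2. \<forall>y\<in>L1 \<times> L2. sum_form \<omega>1 \<omega>2 x y = 0"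
    and dim: "2 * (dim L1 + dim L2) = DIM('a) + DIM('b)"
    using assms(5) dim_Times[OF assms(3,4)] by (simp_all add: lagrangian_def)
  have iso1: "\<forall>x\<in>L1. \<forall>y\<in>L1. \<omega>1 x y = 0"
    using iso subspace_0[OF assms(4)] assms(2)
    by (force simp: sum_form_def symplectic_formD bilinear_lzero)
  have iso2: "\<forall>x\<in>L2. \<forall>y\<in>L2. \<omega>2 x y = 0"
    using iso subspace_0[OF assms(3)] assms(1)
    by (force simp: sum_form_def symplectic_formD bilinear_lzero)
  have "2 * dim L1 \<le> DIM('a)" "2 * dim L2 \<le> DIM('b)"
    using isotropic_dim_le[OF symplectic_formD[OF assms(1)] assms(3) iso1]
      isotropic_dim_le[OF symplectic_formD[OF assms(2)] assms(4) iso2] by auto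
  then show "lagrangian \<omega>1 L1" "lagrangian \<omega>2 L2"
    using dim assms(3,4) iso1 iso2 by (simp_all add: lagrangian_def)
qed

theorem lemma2:
  fixes \<omega>1 :: "real^'n \<Rightarrow> real^'n \<Rightarrow> real" and H1 :: "real^'n \<Rightarrow> real"
    and X1 :: "real^'n \<Rightarrow> real^'n"
    and \<omega>2 :: "real^'m \<Rightarrow> real^'m \<Rightarrow> real" and H2 :: "real^'m \<Rightarrow> real"
    and X2 :: "real^'m \<Rightarrow> real^'m"
    and L :: "((real^'n) \<times> (real^'m)) set"
  assumes "symplectic_form \<omega>1" and "symplectic_form \<omega>2"
    and "quadratic_form H1" and "quadratic_form H2"
    and "ham_field \<omega>1 H1 X1" and "ham_field \<omega>2 H2 X2"
    and "\<forall>\<mu>. \<not> (cx_eigenvalue X1 \<mu> \<and> cx_eigenvalue X2 \<mu>)"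
    and "lagrangian (sum_form \<omega>1 \<omega>2) L"
    and "L \<subseteq> {v. sum_ham H1 H2 v = 0}"
  shows "\<exists>L1 L2. lagrangian \<omega>1 L1 \<and> lagrangian \<omega>2 L2
           \<and> L1 \<subseteq> {v. H1 v = 0} \<and> L2 \<subseteq> {v. H2 v = 0}
           \<and> L = L1 \<times> L2"
proof -
  have "subspace L"
    using assms(8) by (simp add: lagrangian_def)
  have "linear X1" "linear X2"
    using assms(5,6) by (simp_all add: ham_field_def)
  have invariant: "(X1 a, X2 b) \<in> L" if "(a, b) \<in> L" for a b
    using lagrangian_null_invariant[OF symplectic_formD[OF symplectic_form_sum_form[OF assms(1,2)]]
        quadratic_form_sum_ham[OF assms(3,4)] ham_field_sum[OF assms(5,6)] assms(8,9) that]
    by simp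
  define L1 where "L1 = {a. (a, 0) \<in> L}"
  define L2 where "L2 = {b. (0, b) \<in> L}"
  have L: "L = L1 \<times> L2"
    unfolding L1_def L2_def using \<open>subspace L\<close>
    by (rule subspace_eq_Times_slices)
      (rule invariant_subspace_slice[OF \<open>linear X1\<close> \<open>linear X2\<close> assms(7) \<open>subspace L\<close> invariant])
  have "lagrangian \<omega>1 L1" "lagrangian \<omega>2 L2"
    using lagrangian_Times[OF assms(1,2) subspace_slices[OF \<open>subspace L\<close>]] assms(8)
    by (simp_all flip: L1_def L2_def L)
  moreover have "L1 \<subseteq> {v. H1 v = 0}" "L2 \<subseteq> {v. H2 v = 0}"
    using assms(9) quadratic_form_0[OF assms(3)] quadratic_form_0[OF assms(4)]
    by (auto simp: L1_def L2_def sum_ham_def)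
  ultimately show ?thesis
    using L by blast
qed

end
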